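(* Let $q$ be a prime power. Let $2\leq s\leq k$ be integers. Then \[ n_q(k,s)\leq \frac{q^3-q+1}{q^4}\genfrac{[}{]}{0pt}{}{k}{s}_q. \]
   Context: For a $(k - s)$-dimensional affine subspace $H$ of $\mathbb{F}_q^k$ not passing through the origin, $n_q(k,s)$ denotes the number of $s$-dimensional affine subspaces through the origin that are disjoint from $H$ (this is independent of the choice of $H$). For integers $0 \leq s \leq k$, the $q$-binomial (Gaussian) coefficient is $\genfrac{[}{]}{0pt}{}{k}{s}_q = \frac{(q^k - 1) \cdots (q^{k - s+ 1} - 1)}{(q^s - 1) \cdots (q - 1)}$ (empty product equal to $1$), and it is defined to be $0$ for other values of $s,k$. *)

theory Defs
  imports "HOL-Analysis.Analysis"
begin

definition qbinom :: "nat \<Rightarrow> nat \<Rightarrow> nat \<Rightarrow> real" where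
  "qbinom q k s = (if s \<le> k then
      (\<Prod>i<s. (real q ^ (k - i) - 1)) / (\<Prod>i\<in>{1..s}. (real q ^ i - 1))
    else 0)"

definition lin_subspaces :: "nat \<Rightarrow> ('a::field ^ 'n) set set" where
  "lin_subspaces d = {S. vec.subspace S \<and> vec.dim S = d}"

definition aff_subspace :: "nat \<Rightarrow> ('a::field ^ 'n) set \<Rightarrow> bool" where
  "aff_subspace d H \<longleftrightarrow> (\<exists>v W. W \<in> lin_subspaces d \<and> H = (\<lambda>w. v + w) ` W)"

end

theory Submission
  imports Defs
begin

(* Write H = v + W with W a linear subspace and v not in W. An s-dimensional subspace S misses H
   iff v is not in span (S \<union> W), so each ordered basis of such an S is an independent sequence
   z_1, ..., z_s with v outside span ({z_1, ..., z_s} \<union> W), and each S has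
   (q^s - 1)(q^s - q)...(q^s - q^(s-1)) ordered bases. These sequences are counted one vector at a
   time. If the current span X has dimension k - 1 - e, an admissible next vector either lies in X
   (and e stays) or lies outside X + <v> (and e drops by one). Measuring both kinds as proportions
   a^(e+1) and 1 - a^e, with a = 1/q, of the q^k - q^j vectors independent of the j vectors chosen
   so far gives the recursion of avoid_bound, starting at e = s - 1. Hence the number of sequences is
   at most (q^k - 1)...(q^k - q^(s-1)) avoid_bound a s (s - 1), where the product is the number of
   ordered bases times the Gaussian coefficient, and avoid_bound a s (s - 1) <= a - a^3 + a^4 for
   a <= 1/2. *)

lemma card_span_independent:
  fixes B :: "('a::{finite,field} ^ 'n) set"
  assumes "vec.independent B"
  shows "card (vec.span B) = CARD('a) ^ card B"
  using finite[of B] assms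
proof (induction B rule: finite_induct)
  case empty
  then show ?case by simp
next
  case (insert b B)
  have indep: "vec.independent B" and b: "b \<notin> vec.span B"
    using insert vec.independent_insert[of b B] by auto
  let ?f = "\<lambda>(c, x). c *s b + x"
  have span_eq: "vec.span (insert b B) = ?f ` (UNIV \<times> vec.span B)"
  proof (intro equalityI subsetI)
    fix x assume "x \<in> vec.span (insert b B)"
    then obtain c where "x - c *s b \<in> vec.span B" using vec.span_insert by blast
    then show "x \<in> ?f ` (UNIV \<times> vec.span B)"
      by (intro image_eqI[of _ _ "(c, x - c *s b)"]) auto
  next
    fix x assume "x \<in> ?f ` (UNIV \<times> vec.span B)"
    then show "x \<in> vec.span (insert b B)"
      by (auto intro: vec.span_add vec.span_scale vec.span_base
               dest: vec.span_mono[of B "insert b B", THEN subsetD, rotated])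
  qed
  have "inj_on ?f (UNIV \<times> vec.span B)"
  proof (rule inj_onI, clarsimp)
    fix c x c' x'
    assume x: "x \<in> vec.span B" "x' \<in> vec.span B" and eq: "c *s b + x = c' *s b + x'"
    have "(c - c') *s b = x' - x"
      using eq by (simp add: algebra_simps vec.scale_left_diff_distrib)
    then have "(c - c') *s b \<in> vec.span B" using vec.span_diff[OF x(2) x(1)] by simp
    then have "c = c'"
    proof (rule contrapos_pp)
      assume "c \<noteq> c'"
      then have "inverse (c - c') *s ((c - c') *s b) = b" by (subst vec.scale_scale) simp
      then show "(c - c') *s b \<notin> vec.span B" using b vec.span_scale by metis
    qed
    then show "c = c' \<and> x = x'" using eq by simp
  qed
  then have "card (vec.span (insert b B)) = CARD('a) * card (vec.span B)"
    by (simp add: span_eq card_image card_cartesian_product)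
  then show ?case using insert indep by simp
qed

lemma card_span:
  fixes X :: "('a::{finite,field} ^ 'n) set"
  shows "card (vec.span X) = CARD('a) ^ vec.dim X"
proof -
  obtain B where "B \<subseteq> vec.span X" "vec.independent B" "vec.span X \<subseteq> vec.span B"
    and "card B = vec.dim (vec.span X)"
    using vec.basis_exists by blast
  then show ?thesis
    using card_span_independent vec.span_subspace[of B "vec.span X"] vec.subspace_span by fastforce
qed

lemma card_span_diff:
  fixes X Y :: "('a::{finite,field} ^ 'n) set"
  assumes "X \<subseteq> vec.span Y"
  shows "card (vec.span Y - vec.span X) = CARD('a) ^ vec.dim Y - CARD('a) ^ vec.dim X"
proof -
  have "vec.span X \<subseteq> vec.span Y" using assms vec.span_minimal vec.subspace_span by blast
  then show ?thesis by (simp add: card_Diff_subset card_span)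
qed

lemma two_le_card_zero_neq_one: "2 \<le> CARD('a::{finite,zero_neq_one})"
proof -
  have "card {0 :: 'a, 1} \<le> CARD('a)" by (rule card_mono) simp_all
  then show ?thesis by simp
qed

(* For e = 0 the second summand vanishes, so the truncated e - 1 is harmless. *)
fun avoid_bound :: "real \<Rightarrow> nat \<Rightarrow> nat \<Rightarrow> real" where
  "avoid_bound a 0 e = 1"
| "avoid_bound a (Suc t) e = a ^ (e + 1) * avoid_bound a t e + (1 - a ^ e) * avoid_bound a t (e - 1)"

context
  fixes a :: real
  assumes a_nonneg: "0 \<le> a" and a_le_one: "a \<le> 1"
begin

lemma avoid_bound_nonneg: "0 \<le> avoid_bound a t e"
  by (induction t arbitrary: e) (simp_all add: a_nonneg a_le_one power_le_one)

lemma avoid_bound_le_one: "avoid_bound a t e \<le> 1"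
proof (induction t arbitrary: e)
  case 0
  then show ?case by simp
next
  case (Suc t)
  have "a ^ (e + 1) \<le> a ^ e" "a ^ e \<le> 1"
    using a_nonneg a_le_one power_decreasing[of e "e + 1" a] by (simp_all add: power_le_one)
  moreover have "avoid_bound a (Suc t) e \<le> a ^ (e + 1) + (1 - a ^ e)"
    using Suc a_nonneg \<open>a ^ e \<le> 1\<close>
    by (simp add: add_mono mult_left_le)
  ultimately show ?case by linarith
qed

lemma avoid_bound_mono: "avoid_bound a t e \<le> avoid_bound a t (Suc e)"
proof (induction t arbitrary: e)
  case 0
  then show ?case by simp
next
  case (Suc t)
  have le1: "a ^ e \<le> 1" "a ^ (e + 1) \<le> 1" using a_nonneg a_le_one power_le_one by blast+
  have B: "0 \<le> avoid_bound a t e" by (rule avoid_bound_nonneg)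
  have "avoid_bound a t (e - 1) \<le> avoid_bound a t e" using Suc.IH by (cases e) auto
  then have "avoid_bound a (Suc t) e \<le> a ^ (e + 1) * avoid_bound a t e + (1 - a ^ e) * avoid_bound a t e"
    using le1 by (simp add: mult_left_mono)
  also have "\<dots> = (a ^ (e + 1) + 1 - a ^ e) * avoid_bound a t e"
    by (simp add: algebra_simps)
  also have "\<dots> \<le> (a ^ (e + 2) + 1 - a ^ (e + 1)) * avoid_bound a t e"
  proof (rule mult_right_mono[OF _ B])
    have "0 \<le> a ^ e * (1 - a)\<^sup>2" using a_nonneg by simp
    then show "a ^ (e + 1) + 1 - a ^ e \<le> a ^ (e + 2) + 1 - a ^ (e + 1)"
      by (simp add: power2_eq_square algebra_simps)
  qed
  also have "\<dots> \<le> avoid_bound a (Suc t) (Suc e)"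
    using Suc.IH[of e] a_nonneg by (simp add: mult_left_mono algebra_simps)
  finally show ?case .
qed


end

lemma avoid_bound_diag_le:
  assumes "0 \<le> a" "a \<le> 1/2" "1 \<le> t"
  shows "avoid_bound a t t \<le> 1 - a\<^sup>2 + a ^ 3"
  using assms(3)
proof (induction t rule: nat_induct_at_least)
  case base
  have "0 \<le> a * (1 - a)\<^sup>2" using assms by simp
  then show ?case by (simp add: power2_eq_square power3_eq_cube algebra_simps)
next
  case (Suc t)
  define c where "c = 1 - a\<^sup>2 + a ^ 3"
  have "a\<^sup>2 \<le> 1/4" using assms power_mono[of a "1/2" 2] by (simp add: power2_eq_square)
  moreover have "0 \<le> a ^ 3" using assms by simp
  ultimately have "a \<le> c" using assms unfolding c_def by linarith
  moreover have "avoid_bound a t (Suc t) \<le> 1" using assms by (intro avoid_bound_le_one) simp_all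
  ultimately have "a * avoid_bound a t (Suc t) \<le> c"
    using assms mult_left_le[of "avoid_bound a t (Suc t)" a] by linarith
  moreover have "avoid_bound a t t \<le> c" using Suc.IH unfolding c_def .
  ultimately have "a ^ (t + 1) * (a * avoid_bound a t (Suc t)) + (1 - a ^ (t + 1)) * avoid_bound a t t
      \<le> a ^ (t + 1) * c + (1 - a ^ (t + 1)) * c"
    using assms power_le_one[of a "t + 1"] by (intro add_mono mult_left_mono) simp_all
  then show ?case unfolding c_def by (simp add: algebra_simps)
qed

lemma avoid_bound_subdiag_le:
  assumes "0 \<le> a" "a \<le> 1/2" "2 \<le> s"
  shows "avoid_bound a s (s - 1) \<le> a - a ^ 3 + a ^ 4"
  using assms(3)
proof (induction s rule: nat_induct_at_least)
  case base
  show ?case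
    by (simp add: numeral_2_eq_2 power2_eq_square power3_eq_cube power4_eq_xxxx algebra_simps)
next
  case (Suc s)
  define c where "c = a - a ^ 3 + a ^ 4"
  have "a * avoid_bound a s s \<le> a * (1 - a\<^sup>2 + a ^ 3)"
    using avoid_bound_diag_le[OF assms(1,2), of s] Suc.hyps assms(1) by (simp add: mult_left_mono)
  then have "a * avoid_bound a s s \<le> c"
    unfolding c_def by (simp add: algebra_simps power2_eq_square power3_eq_cube power4_eq_xxxx)
  moreover have "avoid_bound a s (s - 1) \<le> c" using Suc.IH unfolding c_def .
  ultimately have "a ^ s * (a * avoid_bound a s s) + (1 - a ^ s) * avoid_bound a s (s - 1)
      \<le> a ^ s * c + (1 - a ^ s) * c"
    using assms power_le_one[of a s] by (intro add_mono mult_left_mono) simp_all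
  then show ?case unfolding c_def by (simp add: algebra_simps)
qed

(* The proportions overestimate the first kind of vectors and underestimate the second; this is
   harmless because B0 <= B1. *)
lemma counts_le_proportions:
  fixes q B0 B1 :: real
  assumes "1 \<le> q" "0 \<le> B0" "B0 \<le> B1"
  shows "(q ^ d - q ^ j) * B1 + (q ^ (d + e + 1) - q ^ (d + 1)) * B0
    \<le> (q ^ (d + e + 1) - q ^ j) * ((1 / q) ^ (e + 1) * B1 + (1 - (1 / q) ^ e) * B0)"
proof -
  define a where "a = 1 / q"
  have "0 \<le> a" "a \<le> 1" using assms(1) unfolding a_def by simp_all
  then have "a ^ (e + 1) \<le> a ^ e" "a ^ (e + 1) \<le> 1" "a ^ e \<le> 1"
    using power_decreasing[of e "e + 1" a] power_le_one by (simp, blast, blast)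
  then have "(1 - a ^ e) * B0 \<le> (1 - a ^ (e + 1)) * B1"
    using assms by (intro mult_mono) simp_all
  moreover have "(q ^ (d + e + 1) - q ^ j) * (a ^ (e + 1) * B1 + (1 - a ^ e) * B0)
      - ((q ^ d - q ^ j) * B1 + (q ^ (d + e + 1) - q ^ (d + 1)) * B0)
      = q ^ j * ((1 - a ^ (e + 1)) * B1 - (1 - a ^ e) * B0)"
    using assms(1) unfolding a_def by (simp add: field_simps power_add)
  moreover have "0 \<le> q ^ j" using assms(1) by simp
  ultimately show ?thesis unfolding a_def by (metis diff_ge_0_iff_ge mult_nonneg_nonneg)
qed

lemma finite_lists_of_length: "finite {xs :: 'a::finite list. length xs = n}"
  using finite_lists_length_eq[of "UNIV :: 'a set" n] by simp

definition avoiding :: "('a::field ^ 'n) set \<Rightarrow> 'a ^ 'n \<Rightarrow> ('a ^ 'n) list \<Rightarrow> bool" where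
  "avoiding W v xs \<longleftrightarrow> distinct xs \<and> vec.independent (set xs) \<and> v \<notin> vec.span (set xs \<union> W)"

definition avoiding_exts :: "('a::field ^ 'n) set \<Rightarrow> 'a ^ 'n \<Rightarrow> nat \<Rightarrow> ('a ^ 'n) list \<Rightarrow> ('a ^ 'n) list set"
  where "avoiding_exts W v t ys = {zs. length zs = t \<and> avoiding W v (zs @ ys)}"

lemma finite_avoiding_exts: "finite (avoiding_exts (W :: ('a::{finite,field} ^ 'n) set) v t ys)"
  unfolding avoiding_exts_def by (rule finite_subset[OF _ finite_lists_of_length[of t]]) auto

lemma avoiding_appendD: "avoiding W v (xs @ ys) \<Longrightarrow> avoiding W v ys"
  unfolding avoiding_def
  using vec.independent_mono[of "set (xs @ ys)" "set ys"] vec.span_mono[of "set ys \<union> W" "set (xs @ ys) \<union> W"]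
  by auto

lemma avoiding_dim:
  fixes W :: "('a::field ^ 'n) set"
  assumes "avoiding W v ys"
  shows "vec.dim (set ys) = length ys" and "length ys \<le> vec.dim (set ys \<union> W)"
    and "vec.dim (set ys \<union> W) < CARD('n)"
proof -
  show dim_ys: "vec.dim (set ys) = length ys"
    using assms vec.dim_eq_card_independent distinct_card unfolding avoiding_def by metis
  then show "length ys \<le> vec.dim (set ys \<union> W)" using vec.dim_subset[of "set ys" "set ys \<union> W"] by simp
  have "vec.dim (insert v (set ys \<union> W)) = Suc (vec.dim (set ys \<union> W))"
    using assms vec.dim_insert[of v "set ys \<union> W"] unfolding avoiding_def by (metis Suc_eq_plus1)
  then show "vec.dim (set ys \<union> W) < CARD('n)"
    using dim_subset_UNIV_cart_gen[of "insert v (set ys \<union> W)"] by simp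
qed

lemma avoiding_Cons_cases:
  assumes "avoiding W v (z # ys)"
  shows "z \<in> vec.span (set ys \<union> W) - vec.span (set ys)
    \<or> z \<in> vec.span UNIV - vec.span (insert v (set ys \<union> W))"
proof -
  have "z \<notin> vec.span (set ys)"
    using assms vec.independent_insert[of z "set ys"] unfolding avoiding_def by auto
  moreover have "z \<in> vec.span (set ys \<union> W)" if "z \<in> vec.span (insert v (set ys \<union> W))"
    using that assms vec.in_span_insert[of z v "set ys \<union> W"] unfolding avoiding_def by auto
  ultimately show ?thesis by auto
qed

lemma card_avoiding_exts_Suc_le:
  fixes W :: "('a::{finite,field} ^ 'n) set"
  shows "card (avoiding_exts W v (Suc t) ys)
    \<le> (\<Sum>z | avoiding W v (z # ys). card (avoiding_exts W v t (z # ys)))"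
proof -
  let ?Z = "{z. avoiding W v (z # ys)}"
  let ?U = "\<Union>z \<in> ?Z. (\<lambda>zs. zs @ [z]) ` avoiding_exts W v t (z # ys)"
  have "avoiding_exts W v (Suc t) ys \<subseteq> ?U"
  proof
    fix zs assume zs: "zs \<in> avoiding_exts W v (Suc t) ys"
    then have "length zs = Suc t" unfolding avoiding_exts_def by simp
    then obtain xs z where zs_eq: "zs = xs @ [z]" by (auto simp: length_Suc_conv_rev)
    have "avoiding W v (xs @ z # ys)" "length xs = t"
      using zs unfolding zs_eq avoiding_exts_def by simp_all
    then have "z \<in> ?Z" "xs \<in> avoiding_exts W v t (z # ys)"
      using avoiding_appendD[of W v xs "z # ys"] unfolding avoiding_exts_def by simp_all
    then show "zs \<in> ?U" unfolding zs_eq by blast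
  qed
  then have "card (avoiding_exts W v (Suc t) ys) \<le> card ?U"
    by (rule card_mono[rotated]) (simp add: finite_avoiding_exts)
  also have "\<dots> \<le> (\<Sum>z \<in> ?Z. card ((\<lambda>zs. zs @ [z]) ` avoiding_exts W v t (z # ys)))"
    by (rule card_UN_le) simp
  also have "\<dots> \<le> (\<Sum>z \<in> ?Z. card (avoiding_exts W v t (z # ys)))"
    by (intro sum_mono card_image_le finite_avoiding_exts)
  finally show ?thesis .
qed

lemma card_avoiding_exts_Suc_le_counts:
  fixes W :: "('a::{finite,field} ^ 'n) set" and ys :: "('a ^ 'n) list"
  defines "q \<equiv> real CARD('a)" and "X \<equiv> set ys \<union> W"
  assumes "avoiding W v ys" "0 \<le> M0" "M0 \<le> M1"
    and "\<And>z. avoiding W v (z # ys) \<Longrightarrow>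
      real (card (avoiding_exts W v t (z # ys))) \<le> (if z \<in> vec.span X then M1 else M0)"
  shows "real (card (avoiding_exts W v (Suc t) ys))
    \<le> (q ^ vec.dim X - q ^ length ys) * M1 + (q ^ CARD('n) - q ^ (vec.dim X + 1)) * M0"
proof -
  define g where "g z = (if z \<in> vec.span X then M1 else M0)" for z
  define S1 S2 where "S1 = vec.span X - vec.span (set ys)"
    and "S2 = vec.span UNIV - vec.span (insert v X)"
  have "real (card (avoiding_exts W v (Suc t) ys))
      \<le> (\<Sum>z | avoiding W v (z # ys). real (card (avoiding_exts W v t (z # ys))))"
    using card_avoiding_exts_Suc_le[of W v t ys] of_nat_sum by (metis of_nat_le_iff)
  also have "\<dots> \<le> (\<Sum>z | avoiding W v (z # ys). g z)"
    by (rule sum_mono) (use assms(6) in \<open>simp add: g_def\<close>)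
  also have "\<dots> \<le> (\<Sum>z \<in> S1 \<union> S2. g z)"
  proof (rule sum_mono2)
    show "{z. avoiding W v (z # ys)} \<subseteq> S1 \<union> S2"
      using avoiding_Cons_cases[of W v _ ys] unfolding S1_def S2_def X_def by blast
    show "0 \<le> g z" for z using assms(4,5) unfolding g_def by simp
  qed simp
  also have "\<dots> = real (card S1) * M1 + real (card S2) * M0"
  proof -
    have "vec.span X \<subseteq> vec.span (insert v X)" by (rule vec.span_mono) blast
    then have "S1 \<inter> S2 = {}" "\<forall>z \<in> S1. g z = M1" "\<forall>z \<in> S2. g z = M0"
      unfolding S1_def S2_def g_def by auto
    then show ?thesis by (simp add: sum.union_disjoint)
  qed
  also have "\<dots> = (q ^ vec.dim X - q ^ length ys) * M1 + (q ^ CARD('n) - q ^ (vec.dim X + 1)) * M0"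
  proof -
    have "set ys \<subseteq> vec.span X" unfolding X_def by (auto intro: vec.span_base)
    then have card_S1: "card S1 = CARD('a) ^ vec.dim X - CARD('a) ^ length ys"
      using card_span_diff[of "set ys" X] avoiding_dim(1)[OF assms(3)] unfolding S1_def by simp
    have "v \<notin> vec.span X" using assms(3) unfolding avoiding_def X_def by simp
    then have card_S2: "card S2 = CARD('a) ^ CARD('n) - CARD('a) ^ (vec.dim X + 1)"
      using card_span_diff[of "insert v X" UNIV] vec.dim_insert[of v X]
      unfolding S2_def by (simp add: card_cart_basis)
    have "length ys \<le> vec.dim X" "vec.dim X + 1 \<le> CARD('n)" "1 \<le> CARD('a)"
      using avoiding_dim[OF assms(3)] unfolding X_def by (simp_all add: Suc_leI)
    then have "CARD('a) ^ length ys \<le> CARD('a) ^ vec.dim X"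
      "CARD('a) ^ (vec.dim X + 1) \<le> CARD('a) ^ CARD('n)"
      using power_increasing by blast+
    then show ?thesis unfolding q_def card_S1 card_S2 by (simp add: of_nat_diff)
  qed
  finally show ?thesis .
qed

lemma card_avoiding_exts_le:
  fixes W :: "('a::{finite,field} ^ 'n) set"
  assumes "avoiding W v ys"
  shows "real (card (avoiding_exts W v t ys))
    \<le> (\<Prod>i<t. real (CARD('a) ^ CARD('n) - CARD('a) ^ (length ys + i)))
      * avoid_bound (1 / real CARD('a)) t (CARD('n) - 1 - vec.dim (set ys \<union> W))"
  using assms
proof (induction t arbitrary: ys)
  case 0
  have "avoiding_exts W v 0 ys \<subseteq> {[]}" unfolding avoiding_exts_def by auto
  then have "card (avoiding_exts W v 0 ys) \<le> card {[] :: ('a ^ 'n) list}" by (rule card_mono[rotated]) simp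
  then show ?case by simp
next
  case (Suc t ys)
  define q k where "q = CARD('a)" and "k = CARD('n)"
  define X j where "X = set ys \<union> W" and "j = length ys"
  define d e where "d = vec.dim X" and "e = k - 1 - d"
  define P B1 B0 where "P = (\<Prod>i<t. real (q ^ k - q ^ (Suc j + i)))"
    and "B1 = avoid_bound (1 / real q) t e" and "B0 = avoid_bound (1 / real q) t (e - 1)"
  have q: "1 \<le> q" unfolding q_def by (simp add: Suc_leI)
  have dims: "j \<le> d" "k = d + e + 1"
    using avoiding_dim[OF Suc.prems] unfolding X_def j_def d_def e_def k_def by auto
  have "0 \<le> 1 / real q" "1 / real q \<le> 1" using q by simp_all
  then have B: "0 \<le> B0" "B0 \<le> B1"
    unfolding B0_def B1_def using avoid_bound_nonneg avoid_bound_mono[of _ t "e - 1"]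
    by (auto, cases e, auto)
  have "0 \<le> P" unfolding P_def by (simp add: prod_nonneg)
  have "real (card (avoiding_exts W v t (z # ys))) \<le> (if z \<in> vec.span X then P * B1 else P * B0)"
    if "avoiding W v (z # ys)" for z
  proof -
    have "vec.dim (set (z # ys) \<union> W) = (if z \<in> vec.span X then d else d + 1)"
      using vec.dim_insert[of z X] unfolding X_def d_def by simp
    then show ?thesis
      using Suc.IH[OF that] dims unfolding P_def B1_def B0_def q_def k_def e_def j_def
      by (cases "z \<in> vec.span X") (simp_all add: diff_diff_add)
  qed
  then have "real (card (avoiding_exts W v (Suc t) ys))
      \<le> (real q ^ d - real q ^ j) * (P * B1) + (real q ^ (d + e + 1) - real q ^ (d + 1)) * (P * B0)"
    using card_avoiding_exts_Suc_le_counts[OF Suc.prems, of "P * B0" "P * B1" t] \<open>0 \<le> P\<close> B dims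
    unfolding q_def k_def X_def d_def j_def by (simp add: mult_left_mono)
  also have "\<dots> = P * ((real q ^ d - real q ^ j) * B1 + (real q ^ (d + e + 1) - real q ^ (d + 1)) * B0)"
    by (simp add: algebra_simps)
  also have "\<dots> \<le> P * ((real q ^ (d + e + 1) - real q ^ j)
      * ((1 / real q) ^ (e + 1) * B1 + (1 - (1 / real q) ^ e) * B0))"
    using q B \<open>0 \<le> P\<close> by (intro mult_left_mono counts_le_proportions) simp_all
  also have "\<dots> = (\<Prod>i<Suc t. real (q ^ k - q ^ (j + i))) * avoid_bound (1 / real q) (Suc t) e"
  proof -
    have "q ^ j \<le> q ^ k" using q dims power_increasing[of j k q] by simp
    then show ?thesis
      unfolding prod.lessThan_Suc_shift P_def B1_def B0_def
      using dims by (simp add: of_nat_diff mult_ac)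
  qed
  finally show ?case unfolding q_def k_def e_def d_def X_def j_def .
qed

definition indep_exts :: "('a::field ^ 'n) set \<Rightarrow> nat \<Rightarrow> ('a ^ 'n) list \<Rightarrow> ('a ^ 'n) list set" where
  "indep_exts S t ys =
    {zs. length zs = t \<and> set zs \<subseteq> S \<and> distinct (zs @ ys) \<and> vec.independent (set (zs @ ys))}"

lemma finite_indep_exts: "finite (indep_exts (S :: ('a::{finite,field} ^ 'n) set) t ys)"
  unfolding indep_exts_def by (rule finite_subset[OF _ finite_lists_of_length[of t]]) auto

lemma card_indep_exts_ge:
  fixes S :: "('a::{finite,field} ^ 'n) set"
  assumes "vec.subspace S"
    and "set ys \<subseteq> S" "distinct ys" "vec.independent (set ys)" "length ys + t \<le> vec.dim S"
  shows "(\<Prod>i<t. CARD('a) ^ vec.dim S - CARD('a) ^ (length ys + i)) \<le> card (indep_exts S t ys)"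
  using assms(2-5)
proof (induction t arbitrary: ys)
  case 0
  then have "[] \<in> indep_exts S 0 ys" unfolding indep_exts_def by simp
  then show ?case using card_mono[OF finite_indep_exts, of "{[]}"] by simp
next
  case (Suc t ys)
  define q m j where "q = CARD('a)" and "m = vec.dim S" and "j = length ys"
  define T where "T = S - vec.span (set ys)"
  define P where "P = (\<Prod>i<t. q ^ m - q ^ (Suc j + i))"
  have span_S: "vec.span S = S" using assms(1) vec.span_eq_iff by blast
  have "vec.dim (set ys) = j"
    using vec.dim_eq_card_independent[OF Suc.prems(3)] distinct_card[OF Suc.prems(2)] unfolding j_def by simp
  then have card_T: "card T = q ^ m - q ^ j"
    using card_span_diff[of "set ys" S, unfolded span_S] Suc.prems(1) unfolding T_def q_def m_def by simp
  have ext_ge: "P \<le> card (indep_exts S t (z # ys))" if "z \<in> T" for z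
  proof -
    have "z \<in> S" "z \<notin> vec.span (set ys)" using that unfolding T_def by auto
    then show ?thesis
      using Suc.IH[of "z # ys"] Suc.prems vec.independent_insert[of z "set ys"] vec.span_base[of z "set ys"]
      unfolding P_def q_def m_def j_def by auto
  qed
  have "card T * P \<le> (\<Sum>z\<in>T. card (indep_exts S t (z # ys)))"
    using sum_mono[of T "\<lambda>_. P"] ext_ge by simp
  also have "\<dots> = (\<Sum>z\<in>T. card ((\<lambda>zs. zs @ [z]) ` indep_exts S t (z # ys)))"
    by (simp add: card_image inj_on_def)
  also have "\<dots> = card (\<Union>z\<in>T. (\<lambda>zs. zs @ [z]) ` indep_exts S t (z # ys))"
    by (rule card_UN_disjoint[symmetric]) (auto simp: finite_indep_exts)
  also have "\<dots> \<le> card (indep_exts S (Suc t) ys)"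
    by (rule card_mono[OF finite_indep_exts]) (auto simp: indep_exts_def T_def)
  finally show ?case
    unfolding prod.lessThan_Suc_shift card_T P_def q_def m_def j_def by (simp add: mult_ac)
qed

lemma not_in_span_Un_if_disjoint_translate:
  fixes S W :: "('a::field ^ 'n) set"
  assumes "vec.subspace S" "vec.subspace W" "S \<inter> (\<lambda>w. v + w) ` W = {}"
  shows "v \<notin> vec.span (S \<union> W)"
proof
  assume "v \<in> vec.span (S \<union> W)"
  then obtain x y where xy: "v = x + y" "x \<in> vec.span S" "y \<in> vec.span W"
    unfolding vec.span_Un by blast
  then have "x \<in> S" "- y \<in> W"
    using assms(1,2) vec.span_eq_iff vec.subspace_neg by blast+
  moreover have "x = v + - y" using xy(1) by simp
  ultimately show False using assms(3) by blast
qed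

lemma span_indep_exts_eq:
  assumes "S \<in> lin_subspaces s" "zs \<in> indep_exts S s []"
  shows "vec.span (set zs) = S"
proof -
  have S: "vec.subspace S" "vec.dim S = s" using assms(1) unfolding lin_subspaces_def by auto
  have zs: "length zs = s" "set zs \<subseteq> S" "distinct zs" "vec.independent (set zs)"
    using assms(2) unfolding indep_exts_def by auto
  then have "S \<subseteq> vec.span (set zs)"
    using vec.card_ge_dim_independent[OF zs(2) zs(4)] S(2) distinct_card[OF zs(3)] by simp
  then show ?thesis using vec.span_subspace[OF zs(2) _ S(1)] by blast
qed

lemma card_disjoint_subspaces_mult_le:
  fixes W :: "('a::{finite,field} ^ 'n) set"
  assumes "vec.subspace W"
  shows "card {S \<in> lin_subspaces s. S \<inter> (\<lambda>w. v + w) ` W = {}} * (\<Prod>i<s. CARD('a) ^ s - CARD('a) ^ i)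
    \<le> card (avoiding_exts W v s [])"
proof -
  define F where "F = {S \<in> lin_subspaces s. S \<inter> (\<lambda>w. v + w) ` W = {}}"
  have exts_sub: "indep_exts S s [] \<subseteq> avoiding_exts W v s []" if "S \<in> F" for S
  proof
    fix zs assume zs: "zs \<in> indep_exts S s []"
    have "vec.subspace S" "S \<inter> (\<lambda>w. v + w) ` W = {}"
      using that unfolding F_def lin_subspaces_def by auto
    then have "v \<notin> vec.span (S \<union> W)"
      using assms not_in_span_Un_if_disjoint_translate[of S W v] by blast
    moreover have "vec.span (set zs \<union> W) \<subseteq> vec.span (S \<union> W)"
      using zs by (intro vec.span_mono) (auto simp: indep_exts_def)
    ultimately show "zs \<in> avoiding_exts W v s []"
      using zs unfolding avoiding_exts_def avoiding_def indep_exts_def by auto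
  qed
  have "(\<Prod>i<s. CARD('a) ^ s - CARD('a) ^ i) \<le> card (indep_exts S s [])" if "S \<in> F" for S
    using that card_indep_exts_ge[of S "[]" s] vec.independent_empty unfolding F_def lin_subspaces_def by auto
  then have "card F * (\<Prod>i<s. CARD('a) ^ s - CARD('a) ^ i) \<le> (\<Sum>S\<in>F. card (indep_exts S s []))"
    using sum_bounded_below[of F "\<Prod>i<s. CARD('a) ^ s - CARD('a) ^ i"] by simp
  also have "\<dots> = card (\<Union>S\<in>F. indep_exts S s [])"
  proof (rule card_UN_disjoint[symmetric])
    show "\<forall>S\<in>F. \<forall>S'\<in>F. S \<noteq> S' \<longrightarrow> indep_exts S s [] \<inter> indep_exts S' s [] = {}"
    proof (intro ballI impI)
      fix S S' assume "S \<in> F" "S' \<in> F" "S \<noteq> S'"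
      then have "S \<in> lin_subspaces s" "S' \<in> lin_subspaces s" unfolding F_def by simp_all
      then have "zs \<notin> indep_exts S' s []" if "zs \<in> indep_exts S s []" for zs
        using that span_indep_exts_eq \<open>S \<noteq> S'\<close> by metis
      then show "indep_exts S s [] \<inter> indep_exts S' s [] = {}" by blast
    qed
  qed (simp_all add: finite_indep_exts)
  also have "\<dots> \<le> card (avoiding_exts W v s [])"
    by (rule card_mono[OF finite_avoiding_exts]) (use exts_sub in blast)
  finally show ?thesis unfolding F_def .
qed

lemma aff_subspace_avoiding_origin:
  fixes H :: "('a::field ^ 'n) set"
  assumes "aff_subspace d H" "0 \<notin> H"
  obtains v W where "W \<in> lin_subspaces d" "H = (\<lambda>w. v + w) ` W" "avoiding W v []"
proof -
  obtain v W where W: "W \<in> lin_subspaces d" and H: "H = (\<lambda>w. v + w) ` W"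
    using assms(1) unfolding aff_subspace_def by blast
  then have "vec.subspace W" unfolding lin_subspaces_def by simp
  have "v \<notin> W"
  proof
    assume "v \<in> W"
    then have "v + - v \<in> H" unfolding H using vec.subspace_neg[OF \<open>vec.subspace W\<close>] by blast
    then show False using assms(2) by simp
  qed
  moreover have span_W: "vec.span W = W" using \<open>vec.subspace W\<close> vec.span_eq_iff by blast
  ultimately have "avoiding W v []" unfolding avoiding_def by (simp add: span_W vec.independent_empty)
  then show thesis using that W H by blast
qed

lemma prod_diff_powers_factor:
  fixes q :: nat
  assumes "1 \<le> q" "s \<le> n"
  shows "(\<Prod>i<s. real (q ^ n - q ^ i)) = (\<Prod>i<s. real q ^ i) * (\<Prod>i<s. real q ^ (n - i) - 1)"
proof -
  have "real (q ^ n - q ^ i) = real q ^ i * (real q ^ (n - i) - 1)" if "i < s" for i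
  proof -
    have "q ^ i \<le> q ^ n" using that assms by (simp add: power_increasing)
    moreover have "real q ^ n = real q ^ i * real q ^ (n - i)"
      using that assms by (simp flip: power_add)
    ultimately show ?thesis by (simp add: of_nat_diff algebra_simps)
  qed
  then show ?thesis by (simp add: prod.distrib)
qed

lemma prod_diff_powers_eq_qbinom:
  fixes q :: nat
  assumes "2 \<le> q" "s \<le> k"
  shows "(\<Prod>i<s. real (q ^ k - q ^ i)) = (\<Prod>i<s. real (q ^ s - q ^ i)) * qbinom q k s"
proof -
  have "(\<Prod>i<s. real q ^ (s - i) - 1) = (\<Prod>i<s. real q ^ Suc (s - Suc i) - 1)"
    by (rule prod.cong) (simp_all add: Suc_diff_Suc)
  also have "\<dots> = (\<Prod>i\<in>{1..s}. real q ^ i - 1)"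
    using prod.nat_diff_reindex[of "\<lambda>i. real q ^ Suc i - 1" s]
      prod.atLeast1_atMost_eq[of "\<lambda>i. real q ^ i - 1" s] by simp
  finally have denom: "(\<Prod>i<s. real q ^ (s - i) - 1) = (\<Prod>i\<in>{1..s}. real q ^ i - 1)" .
  have "0 < (\<Prod>i\<in>{1..s}. real q ^ i - 1)"
    using assms(1) one_less_power[of "real q"] by (intro prod_pos) auto
  then have "(\<Prod>i\<in>{1..s}. real q ^ i - 1) \<noteq> 0" by linarith
  then show ?thesis
    using assms prod_diff_powers_factor[of q s k] prod_diff_powers_factor[of q s s]
    unfolding qbinom_def denom by simp
qed

lemma qbinom_nonneg: "1 \<le> q \<Longrightarrow> 0 \<le> qbinom q k s"
  unfolding qbinom_def by (auto intro!: divide_nonneg_nonneg prod_nonneg simp: one_le_power)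

lemma card_disjoint_subspaces_le:
  fixes W :: "('a::{finite,field} ^ 'n) set"
  assumes "W \<in> lin_subspaces (CARD('n) - s)" "avoiding W v []" "1 \<le> s" "s \<le> CARD('n)"
  shows "real (card {S \<in> lin_subspaces s. S \<inter> (\<lambda>w. v + w) ` W = {}})
    \<le> qbinom CARD('a) CARD('n) s * avoid_bound (1 / real CARD('a)) s (s - 1)"
proof -
  define q k where "q = CARD('a)" and "k = CARD('n)"
  define F where "F = {S \<in> lin_subspaces s. S \<inter> (\<lambda>w. v + w) ` W = {}}"
  define \<beta> where "\<beta> = (\<Prod>i<s. real (q ^ s - q ^ i))"
  have q: "2 \<le> q" unfolding q_def by (rule two_le_card_zero_neq_one)
  have "0 < \<beta>" unfolding \<beta>_def using q by (intro prod_pos) (simp add: power_strict_increasing)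
  have W: "vec.subspace W" "vec.dim W = k - s" using assms(1) unfolding lin_subspaces_def k_def by auto
  have "real (card F * (\<Prod>i<s. q ^ s - q ^ i)) \<le> real (card (avoiding_exts W v s []))"
    using card_disjoint_subspaces_mult_le[OF W(1), of s v] unfolding F_def q_def of_nat_le_iff .
  then have "real (card F) * \<beta> \<le> real (card (avoiding_exts W v s []))"
    unfolding \<beta>_def by (simp add: of_nat_prod)
  also have "\<dots> \<le> (\<Prod>i<s. real (q ^ k - q ^ i)) * avoid_bound (1 / real q) s (s - 1)"
    using card_avoiding_exts_le[OF assms(2), of s] W(2) assms(3,4) unfolding q_def k_def by simp
  also have "\<dots> = \<beta> * (qbinom q k s * avoid_bound (1 / real q) s (s - 1))"
    using prod_diff_powers_eq_qbinom[OF q assms(4)[folded k_def]] unfolding \<beta>_def by simp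
  finally show ?thesis
    using \<open>0 < \<beta>\<close> unfolding F_def q_def k_def by (simp add: mult.commute[of _ \<beta>])
qed

theorem lemma3p1:
  fixes H :: "('a::{finite,field} ^ 'n) set" and q k s :: nat
  assumes "q = CARD('a)" and "k = CARD('n)"
    and "2 \<le> s" and "s \<le> k"
    and "aff_subspace (k - s) H" and "0 \<notin> H"
  shows "real (card {S \<in> lin_subspaces s. S \<inter> H = {}})
           \<le> (real q ^ 3 - real q + 1) / real q ^ 4 * qbinom q k s"
proof -
  obtain v W where "W \<in> lin_subspaces (k - s)" "H = (\<lambda>w. v + w) ` W" "avoiding W v []"
    using assms(5,6) by (rule aff_subspace_avoiding_origin)
  define a where "a = 1 / real q"
  have q: "2 \<le> q" using assms(1) two_le_card_zero_neq_one by simp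
  have "real (card {S \<in> lin_subspaces s. S \<inter> H = {}}) \<le> qbinom q k s * avoid_bound a s (s - 1)"
    using card_disjoint_subspaces_le[of W s v] \<open>W \<in> _\<close> \<open>H = _\<close> \<open>avoiding W v []\<close> assms(1-4)
    unfolding a_def by simp
  also have "\<dots> \<le> qbinom q k s * (a - a ^ 3 + a ^ 4)"
    using avoid_bound_subdiag_le[of a s] qbinom_nonneg[of q k s] q assms(3) unfolding a_def
    by (intro mult_left_mono) simp_all
  also have "a - a ^ 3 + a ^ 4 = (real q ^ 3 - real q + 1) / real q ^ 4"
    unfolding a_def using q by (simp add: field_simps) algebra
  finally show ?thesis by (simp add: mult.commute)
qed


end
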